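(* Let $\Omega\subseteq\mathbb{R}^d$ be compact, $m\ge0$, and let $h_0,C_1,C_2>0$ be local polynomial reproduction constants as in the context. Let $\varphi:\mathbb{R}_{\ge0}\to\mathbb{R}_{>0}$ be decreasing with $\lim_{n\to\infty}\varphi(n+1)/\varphi(n)$ existing and $<1$. Let $X=\{x_1,\dots,x_N\}\subseteq\Omega$ be $\pi_m(\mathbb{R}^d)$-unisolvent and quasi-uniform w.r.t. $c_{qu}>0$, with $h_{X,\Omega}\le h_0$. For $x\in\Omega$ let $a^*(x)$ be any minimizer of $\sum_{i=1}^N|a_i|/\varphi(\|x-x_i\|_2/q_X)$ subject to $\sum_ip(x_i)a_i=p(x)$ for all $p\in\pi_m(\mathbb{R}^d)$. Then for all $x\in\Omega$ and all $i$, $$|a_i^*(x)|\le\frac{C_1}{\varphi(C_2c_{qu})}\,\varphi\!\left(\frac{\|x-x_i\|_2}{q_X}\right),$$ so the $a_i^*$ provide fast-decaying polynomial reproduction of degree $m$ with respect to $\varphi$ with constant $C=C_1/\varphi(C_2c_{qu})$.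
   Context: Constants $h_0,C_1,C_2>0$: for every finite $X=\{x_1,\dots,x_N\}\subseteq\Omega$ with $h_{X,\Omega}\le h_0$ and every $x\in\Omega$ there are reals $\tilde u_j(x)$ with $\sum_j p(x_j)\tilde u_j(x)=p(x)$ for all $p\in\pi_m(\mathbb{R}^d)$, $\sum_j|\tilde u_j(x)|\le C_1$, $\tilde u_j(x)=0$ if $\|x-x_j\|_2>C_2h_{X,\Omega}$. $q_X=\frac12\min_{i\ne j}\|x_i-x_j\|_2$, $h_{X,\Omega}=\sup_{x\in\Omega}\min_j\|x-x_j\|_2$; quasi-uniform w.r.t. $c_{qu}$ means $q_X\le h_{X,\Omega}\le c_{qu}q_X$. $\pi_m(\mathbb{R}^d)$: polynomials of total degree $\le m$; unisolvent: only the zero polynomial of $\pi_m$ vanishes on $X$. Fast-decaying polynomial reproduction of degree $m$ w.r.t. $\varphi$ with constant $C$: $\sum_jp(x_j)a_j^*=p$ for all $p\in\pi_m(\mathbb{R}^d)$ and $|a_j^*(x)|\le C\varphi(\|x-x_j\|_2/q_X)$ for all $x,j$. *)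

theory Defs
  imports "HOL-Analysis.Analysis"
begin

text \<open>Points of R^d are vectors of type real^'d (d = CARD('d)).
  Multi-indices are functions 'd \<Rightarrow> nat; the monomial x^alpha.\<close>

definition monomial :: "('d::finite \<Rightarrow> nat) \<Rightarrow> real^'d \<Rightarrow> real" where
  "monomial \<alpha> x = (\<Prod>i\<in>UNIV. (x $ i) ^ (\<alpha> i))"

definition polys :: "nat \<Rightarrow> (real^'d::finite \<Rightarrow> real) set" where
  "polys m = {p. \<exists>c :: ('d \<Rightarrow> nat) \<Rightarrow> real.
       p = (\<lambda>x. \<Sum>\<alpha>\<in>{\<alpha>. sum \<alpha> UNIV \<le> m}. c \<alpha> * monomial \<alpha> x)}"

definition unisolvent :: "nat \<Rightarrow> (real^'d::finite) set \<Rightarrow> bool" where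
  "unisolvent m X \<longleftrightarrow> (\<forall>p\<in>polys m. (\<forall>x\<in>X. p x = 0) \<longrightarrow> p = (\<lambda>_. 0))"

definition sep_dist :: "(real^'d::finite) set \<Rightarrow> real" where
  "sep_dist X = Min {dist x y | x y. x \<in> X \<and> y \<in> X \<and> x \<noteq> y} / 2"

definition fill_dist :: "(real^'d::finite) set \<Rightarrow> (real^'d) set \<Rightarrow> real" where
  "fill_dist X \<Omega> = (SUP x\<in>\<Omega>. Min ((\<lambda>y. dist x y) ` X))"

definition quasi_uniform :: "real \<Rightarrow> (real^'d::finite) set \<Rightarrow> (real^'d) set \<Rightarrow> bool" where
  "quasi_uniform c X \<Omega> \<longleftrightarrow> sep_dist X \<le> fill_dist X \<Omega> \<and> fill_dist X \<Omega> \<le> c * sep_dist X"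

definition reproduces :: "nat \<Rightarrow> (real^'d::finite) set \<Rightarrow> (real^'d \<Rightarrow> real) \<Rightarrow> real^'d \<Rightarrow> bool" where
  "reproduces m X u x \<longleftrightarrow> (\<forall>p\<in>polys m. (\<Sum>xj\<in>X. p xj * u xj) = p x)"

definition local_poly_repr ::
  "nat \<Rightarrow> (real^'d::finite) set \<Rightarrow> real \<Rightarrow> real \<Rightarrow> real \<Rightarrow> bool" where
  "local_poly_repr m \<Omega> h0 C1 C2 \<longleftrightarrow>
     (\<forall>X. finite X \<and> X \<subseteq> \<Omega> \<and> fill_dist X \<Omega> \<le> h0 \<longrightarrow>
        (\<forall>x\<in>\<Omega>. \<exists>u :: real^'d \<Rightarrow> real. reproduces m X u x \<and>
            (\<Sum>xj\<in>X. \<bar>u xj\<bar>) \<le> C1 \<and>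
            (\<forall>xj\<in>X. dist x xj > C2 * fill_dist X \<Omega> \<longrightarrow> u xj = 0)))"

text \<open>Fast-decaying polynomial reproduction of degree m w.r.t. phi with constant C;
  a x xj is the coefficient a_j(x).\<close>
definition fast_decaying_repr ::
  "nat \<Rightarrow> (real \<Rightarrow> real) \<Rightarrow> real \<Rightarrow> (real^'d::finite) set \<Rightarrow> (real^'d) set
     \<Rightarrow> (real^'d \<Rightarrow> real^'d \<Rightarrow> real) \<Rightarrow> bool" where
  "fast_decaying_repr m \<phi> C X \<Omega> a \<longleftrightarrow>
     (\<forall>x\<in>\<Omega>. reproduces m X (a x) x) \<and>
     (\<forall>x\<in>\<Omega>. \<forall>xj\<in>X. \<bar>a x xj\<bar> \<le> C * \<phi> (dist x xj / sep_dist X))"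

definition wobj :: "(real \<Rightarrow> real) \<Rightarrow> (real^'d::finite) set \<Rightarrow> real^'d \<Rightarrow> (real^'d \<Rightarrow> real) \<Rightarrow> real" where
  "wobj \<phi> X x a = (\<Sum>xi\<in>X. \<bar>a xi\<bar> / \<phi> (dist x xi / sep_dist X))"

end

theory Submission
  imports Defs
begin

text \<open>The local reproduction \<open>u\<close> of the context is admissible for the minimisation problem, and it
  only uses points with \<open>\<parallel>x - x\<^sub>j\<parallel> / q\<^sub>X \<le> C\<^sub>2 h\<^sub>X\<^sub>,\<^sub>\<Omega> / q\<^sub>X \<le> C\<^sub>2 c\<^sub>q\<^sub>u\<close>, where \<open>\<phi> \<ge> \<phi>(C\<^sub>2 c\<^sub>q\<^sub>u)\<close>.
  Hence the optimal weighted cost is at most \<open>C\<^sub>1 / \<phi>(C\<^sub>2 c\<^sub>q\<^sub>u)\<close>, and a single term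
  \<open>|a\<^sub>i\<^sup>*(x)| / \<phi>(\<parallel>x - x\<^sub>i\<parallel> / q\<^sub>X)\<close> of that cost is no larger.\<close>

lemma sep_dist_pos:
  fixes X :: "(real^'d::finite) set"
  assumes "finite X" "card X \<ge> 2"
  shows "sep_dist X > 0"
proof -
  let ?D = "{dist x y | x y. x \<in> X \<and> y \<in> X \<and> x \<noteq> y}"
  have "?D \<subseteq> (\<lambda>(x, y). dist x y) ` (X \<times> X)" by auto
  hence finite_D: "finite ?D" using assms(1) finite_subset by blast
  obtain a B where "X = insert a B" "a \<notin> B" "1 \<le> card B"
    using assms(2) card_le_Suc_iff[of 1 X] by (auto simp: numeral_2_eq_2)
  then obtain b where "a \<in> X" "b \<in> X" "a \<noteq> b"
    by (metis card.empty ex_in_conv insertCI not_one_le_zero)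
  hence "?D \<noteq> {}" by blast
  moreover have "\<forall>s\<in>?D. s > 0" by auto
  ultimately have "Min ?D > 0" using Min_gr_iff[OF finite_D] by blast
  thus ?thesis unfolding sep_dist_def by simp
qed

lemma abs_le_weight_times_weighted_sum:
  fixes a w :: "'a \<Rightarrow> real"
  assumes "finite X" "xi \<in> X" "\<forall>xj\<in>X. w xj > 0"
  shows "\<bar>a xi\<bar> \<le> w xi * (\<Sum>xj\<in>X. \<bar>a xj\<bar> / w xj)"
proof -
  have "\<bar>a xi\<bar> / w xi \<le> (\<Sum>xj\<in>X. \<bar>a xj\<bar> / w xj)"
    using assms by (intro member_le_sum) auto
  thus ?thesis using assms(2,3) by (simp add: pos_divide_le_eq mult.commute)
qed

lemma wobj_le_if_supported_near:
  fixes X :: "(real^'d::finite) set"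
  assumes "finite X" "sep_dist X > 0" "R \<ge> 0"
    and \<phi>_pos: "\<forall>t\<ge>0. \<phi> t > 0"
    and \<phi>_antimono: "\<forall>s t. 0 \<le> s \<and> s \<le> t \<longrightarrow> \<phi> t \<le> \<phi> s"
    and supp: "\<forall>xj\<in>X. u xj \<noteq> 0 \<longrightarrow> dist x xj \<le> R * sep_dist X"
  shows "wobj \<phi> X x u \<le> (\<Sum>xj\<in>X. \<bar>u xj\<bar>) / \<phi> R"
proof -
  let ?q = "sep_dist X"
  have term_le: "\<bar>u xj\<bar> / \<phi> (dist x xj / ?q) \<le> \<bar>u xj\<bar> / \<phi> R" if "xj \<in> X" for xj
  proof (cases "u xj = 0")
    case False
    hence "dist x xj / ?q \<le> R"
      using supp that assms(2) by (simp add: pos_divide_le_eq)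
    hence "\<phi> R \<le> \<phi> (dist x xj / ?q)" using \<phi>_antimono assms(2) by simp
    thus ?thesis using \<phi>_pos assms(3) by (simp add: frac_le)
  qed simp
  have "wobj \<phi> X x u \<le> (\<Sum>xj\<in>X. \<bar>u xj\<bar> / \<phi> R)"
    unfolding wobj_def using term_le by (rule sum_mono)
  also have "\<dots> = (\<Sum>xj\<in>X. \<bar>u xj\<bar>) / \<phi> R" by (simp add: sum_divide_distrib)
  finally show ?thesis .
qed

lemma abs_le_of_wobj_le_supported_near:
  fixes X :: "(real^'d::finite) set"
  assumes "finite X" "sep_dist X > 0" "R \<ge> 0" "xi \<in> X"
    and \<phi>_pos: "\<forall>t\<ge>0. \<phi> t > 0"
    and \<phi>_antimono: "\<forall>s t. 0 \<le> s \<and> s \<le> t \<longrightarrow> \<phi> t \<le> \<phi> s"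
    and supp: "\<forall>xj\<in>X. u xj \<noteq> 0 \<longrightarrow> dist x xj \<le> R * sep_dist X"
    and "(\<Sum>xj\<in>X. \<bar>u xj\<bar>) \<le> C"
    and cheaper: "wobj \<phi> X x a \<le> wobj \<phi> X x u"
  shows "\<bar>a xi\<bar> \<le> C / \<phi> R * \<phi> (dist x xi / sep_dist X)"
proof -
  have weight_pos: "\<phi> (dist x y / sep_dist X) > 0" for y
    using \<phi>_pos assms(2) by simp
  note cheaper
  also have "wobj \<phi> X x u \<le> (\<Sum>xj\<in>X. \<bar>u xj\<bar>) / \<phi> R"
    using wobj_le_if_supported_near[OF assms(1-3) \<phi>_pos \<phi>_antimono supp] .
  also have "\<dots> \<le> C / \<phi> R"
    using assms(3,8) \<phi>_pos by (intro divide_right_mono) (simp_all add: less_imp_le)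
  finally have cost: "wobj \<phi> X x a \<le> C / \<phi> R" .
  have "\<bar>a xi\<bar> \<le> \<phi> (dist x xi / sep_dist X) * wobj \<phi> X x a"
    unfolding wobj_def using assms(1,4) weight_pos
    by (intro abs_le_weight_times_weighted_sum) auto
  also have "\<dots> \<le> \<phi> (dist x xi / sep_dist X) * (C / \<phi> R)"
    using cost weight_pos by (intro mult_left_mono) (auto intro: less_imp_le)
  finally show ?thesis by (simp only: mult.commute)
qed

theorem mainTheorem7:
  fixes \<Omega> X :: "(real^'d::finite) set"
    and m :: nat and h0 C1 C2 cqu :: real
    and \<phi> :: "real \<Rightarrow> real"
    and astar :: "real^'d \<Rightarrow> real^'d \<Rightarrow> real"
  assumes "compact \<Omega>"
    and "h0 > 0" "C1 > 0" "C2 > 0"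
    and "local_poly_repr m \<Omega> h0 C1 C2"
    and "\<forall>t\<ge>0. \<phi> t > 0"
    and "\<forall>s t. 0 \<le> s \<and> s \<le> t \<longrightarrow> \<phi> t \<le> \<phi> s"
    and "\<exists>L. (\<lambda>n::nat. \<phi> (real n + 1) / \<phi> (real n)) \<longlonglongrightarrow> L \<and> L < 1"
    and "finite X" "card X \<ge> 2" "X \<subseteq> \<Omega>"
    and "unisolvent m X"
    and "cqu > 0" "quasi_uniform cqu X \<Omega>"
    and "fill_dist X \<Omega> \<le> h0"
    and "\<forall>x\<in>\<Omega>. reproduces m X (astar x) x \<and>
           (\<forall>a. reproduces m X a x \<longrightarrow> wobj \<phi> X x (astar x) \<le> wobj \<phi> X x a)"
  shows "(\<forall>x\<in>\<Omega>. \<forall>xi\<in>X. \<bar>astar x xi\<bar> \<le> C1 / \<phi> (C2 * cqu) * \<phi> (dist x xi / sep_dist X))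
       \<and> fast_decaying_repr m \<phi> (C1 / \<phi> (C2 * cqu)) X \<Omega> astar"
proof -
  have q_pos: "sep_dist X > 0" using sep_dist_pos assms(9,10) by blast
  have decay: "\<bar>astar x xi\<bar> \<le> C1 / \<phi> (C2 * cqu) * \<phi> (dist x xi / sep_dist X)"
    if x: "x \<in> \<Omega>" and xi: "xi \<in> X" for x xi
  proof -
    obtain u where u: "reproduces m X u x" "(\<Sum>xj\<in>X. \<bar>u xj\<bar>) \<le> C1"
        "\<forall>xj\<in>X. dist x xj > C2 * fill_dist X \<Omega> \<longrightarrow> u xj = 0"
      using assms(5,9,11,15) x unfolding local_poly_repr_def by blast
    have "C2 * fill_dist X \<Omega> \<le> C2 * cqu * sep_dist X"
      using assms(4,14) unfolding quasi_uniform_def by simp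
    hence "\<forall>xj\<in>X. u xj \<noteq> 0 \<longrightarrow> dist x xj \<le> C2 * cqu * sep_dist X"
      using u(3) by (meson not_less order_trans)
    moreover have "wobj \<phi> X x (astar x) \<le> wobj \<phi> X x u"
      using assms(16) x u(1) by blast
    ultimately show ?thesis
      using abs_le_of_wobj_le_supported_near[OF assms(9) q_pos _ xi assms(6,7) _ u(2)] assms(4,13)
      by simp
  qed
  thus ?thesis unfolding fast_decaying_repr_def using assms(16) by auto
qed

end
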